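(* Let $\mathcal E$ be a separable Hilbert space and let $\psi\in H^\infty_{\mathbb D}(\mathcal B(\mathcal E))$ with $\|\psi\|_\infty\le 1$. Then the following are equivalent: (1) $1$ is an eigenvalue of the multiplication operator $M_\psi$ on $H^2_{\mathbb D}(\mathcal E)$; (2) $1$ is an eigenvalue of $\psi(z)$ for some $z\in\mathbb D$; (3) $1$ is an eigenvalue of $\psi(z)$ for every $z\in\mathbb D$.
   Context: $\mathbb D$ is the open unit disc. $H^2_{\mathbb D}(\mathcal E)$ is the Hardy space of $\mathcal E$-valued holomorphic functions on $\mathbb D$, and $H^\infty_{\mathbb D}(\mathcal B(\mathcal E))$ is the Banach algebra of bounded holomorphic $\mathcal B(\mathcal E)$-valued functions on $\mathbb D$ with $\|\psi\|_\infty=\sup_{z\in\mathbb D}\|\psi(z)\|$. $M_\psi$ denotes the operator $f\mapsto \psi f$ on $H^2_{\mathbb D}(\mathcal E)$. *)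

theory Defs
  imports "HOL-Analysis.Analysis"
begin

text \<open>Complex Hilbert spaces (not in the distribution): a Banach space with a
  complex scalar multiplication compatible with the real one, and a complex inner
  product (conjugate-linear in the first argument) inducing the norm.\<close>

class complex_hilbert_space = banach +
  fixes scaleC :: "complex \<Rightarrow> 'a \<Rightarrow> 'a"
  fixes cinner :: "'a \<Rightarrow> 'a \<Rightarrow> complex"
  assumes scaleC_add_right: "scaleC a (x + y) = scaleC a x + scaleC a y"
    and scaleC_add_left: "scaleC (a + b) x = scaleC a x + scaleC b x"
    and scaleC_scaleC: "scaleC a (scaleC b x) = scaleC (a * b) x"
    and scaleC_one: "scaleC 1 x = x"
    and scaleR_scaleC: "scaleR r x = scaleC (complex_of_real r) x"
    and cinner_commute: "cinner x y = cnj (cinner y x)"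
    and cinner_add_left: "cinner (x + y) z = cinner x z + cinner y z"
    and cinner_scaleC_left: "cinner (scaleC a x) y = cnj a * cinner x y"
    and norm_eq_sqrt_cinner: "norm x = sqrt (Re (cinner x x))"

definition cblinear :: "('a::complex_hilbert_space \<Rightarrow> 'a) \<Rightarrow> bool" where
  "cblinear T \<longleftrightarrow> bounded_linear T \<and> (\<forall>c x. T (scaleC c x) = scaleC c (T x))"

definition is_eigenvalue :: "complex \<Rightarrow> ('a::complex_hilbert_space \<Rightarrow> 'a) \<Rightarrow> bool" where
  "is_eigenvalue c T \<longleftrightarrow> (\<exists>x. x \<noteq> 0 \<and> T x = scaleC c x)"

definition holo_vec :: "complex set \<Rightarrow> (complex \<Rightarrow> 'a::complex_hilbert_space) \<Rightarrow> bool" where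
  "holo_vec S f \<longleftrightarrow>
     (\<forall>z\<in>S. \<exists>d. ((\<lambda>w. scaleC (inverse (w - z)) (f w - f z)) \<longlongrightarrow> d) (at z))"

definition holo_op :: "complex set \<Rightarrow> (complex \<Rightarrow> 'a::complex_hilbert_space \<Rightarrow> 'a) \<Rightarrow> bool" where
  "holo_op S \<psi> \<longleftrightarrow>
     (\<forall>z\<in>S. \<exists>L. bounded_linear L \<and>
        ((\<lambda>w. onorm (\<lambda>x. scaleC (inverse (w - z)) (\<psi> w x - \<psi> z x) - L x)) \<longlongrightarrow> 0) (at z))"

text \<open>The vector-valued Hardy space H^2 on the unit disc (values off the disc irrelevant).\<close>
definition hardy2 :: "(complex \<Rightarrow> 'a::complex_hilbert_space) set" where
  "hardy2 = {f. holo_vec (ball 0 1) f \<and>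
     (\<exists>C. \<forall>r\<in>{0<..<1}.
        integral {0..2*pi} (\<lambda>t. (norm (f (complex_of_real r * exp (\<i> * complex_of_real t))))\<^sup>2) \<le> C)}"

end

theory Submission imports Defs "HOL-Complex_Analysis.Complex_Analysis" begin

text \<open>If the contraction \<open>\<psi> z\<close> fixes \<open>x\<close>, then \<open>w \<mapsto> \<langle>x, \<psi> w x\<rangle>\<close> is a holomorphic function
  on the disc whose modulus is bounded by \<open>\<parallel>x\<parallel>\<^sup>2\<close> and attains this bound at \<open>z\<close>. By the maximum
  modulus principle it is constantly \<open>\<parallel>x\<parallel>\<^sup>2\<close>, and a contraction \<open>T\<close> with \<open>\<langle>x, T x\<rangle> = \<parallel>x\<parallel>\<^sup>2\<close>
  must fix \<open>x\<close>. Hence a fixed vector of one \<open>\<psi> z\<close> is fixed by every \<open>\<psi> w\<close>, and as a constant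
  function it is an eigenvector of \<open>M\<^sub>\<psi>\<close> in \<open>H\<^sup>2\<close>.\<close>

lemma scaleC_zero_right [simp]: "scaleC c (0::'a::complex_hilbert_space) = 0"
  using scaleC_add_right[of c "0::'a" 0] by simp

lemma cinner_zero_left [simp]: "cinner (0::'a::complex_hilbert_space) y = 0"
  using cinner_add_left[of "0::'a" 0 y] by simp

lemma cinner_add_right: "cinner (x::'a::complex_hilbert_space) (y + z) = cinner x y + cinner x z"
  by (metis cinner_commute cinner_add_left complex_cnj_add)

lemma cinner_scaleC_right: "cinner (x::'a::complex_hilbert_space) (scaleC a y) = a * cinner x y"
  by (metis cinner_commute cinner_scaleC_left complex_cnj_mult complex_cnj_cnj)

lemma cinner_diff_left: "cinner (x - y::'a::complex_hilbert_space) z = cinner x z - cinner y z"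
  by (metis cinner_add_left eq_diff_eq)

lemma cinner_diff_right: "cinner (x::'a::complex_hilbert_space) (y - z) = cinner x y - cinner x z"
  by (metis cinner_add_right eq_diff_eq)

lemma cinner_self: "cinner (x::'a::complex_hilbert_space) x = complex_of_real ((norm x)\<^sup>2)"
proof -
  have im: "Im (cinner x x) = 0"
    using cinner_commute[of x x] by (metis cnj.simps(2) neg_equal_zero)
  have re: "Re (cinner x x) \<ge> 0"
    using norm_eq_sqrt_cinner[of x] by (metis norm_ge_zero real_sqrt_ge_0_iff)
  have "(norm x)\<^sup>2 = Re (cinner x x)"
    using norm_eq_sqrt_cinner[of x] re by simp
  with im show ?thesis by (simp add: complex_eq_iff)
qed

lemma norm_scaleC: "norm (scaleC c (x::'a::complex_hilbert_space)) = cmod c * norm x"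
proof -
  have "complex_of_real ((norm (scaleC c x))\<^sup>2) = cinner (scaleC c x) (scaleC c x)"
    by (rule cinner_self[symmetric])
  also have "\<dots> = cnj c * c * cinner x x"
    by (simp add: cinner_scaleC_left cinner_scaleC_right)
  also have "\<dots> = complex_of_real ((cmod c)\<^sup>2) * complex_of_real ((norm x)\<^sup>2)"
    by (simp only: cinner_self complex_norm_square mult.commute)
  finally have "(norm (scaleC c x))\<^sup>2 = (cmod c * norm x)\<^sup>2"
    by (metis of_real_mult of_real_eq_iff power_mult_distrib)
  then show ?thesis
    by (simp add: power2_eq_iff_nonneg)
qed

lemma bounded_linear_scaleC: "bounded_linear (scaleC c :: 'a::complex_hilbert_space \<Rightarrow> 'a)"
proof (rule bounded_linear_intro[where K = "cmod c"])
  fix x y :: 'a and r :: real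
  show "scaleC c (x + y) = scaleC c x + scaleC c y"
    by (rule scaleC_add_right)
  show "scaleC c (r *\<^sub>R x) = r *\<^sub>R scaleC c x"
    by (simp add: scaleR_scaleC scaleC_scaleC mult.commute)
  show "norm (scaleC c x) \<le> norm x * cmod c"
    by (simp add: norm_scaleC mult.commute)
qed

lemma cinner_Cauchy_Schwarz: "cmod (cinner (x::'a::complex_hilbert_space) y) \<le> norm x * norm y"
proof (cases "y = 0")
  case True
  then show ?thesis
    by (simp add: cinner_commute[of x 0])
next
  case False
  define N where "N = (norm y)\<^sup>2"
  define a where "a = cinner y x"
  have N_pos: "N > 0"
    using False by (simp add: N_def)
  \<comment> \<open>expand \<open>\<parallel>N x - a y\<parallel>\<^sup>2 \<ge> 0\<close>\<close>
  have "complex_of_real ((norm (scaleC (of_real N) x - scaleC a y))\<^sup>2)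
      = cinner (scaleC (of_real N) x - scaleC a y) (scaleC (of_real N) x - scaleC a y)"
    by (rule cinner_self[symmetric])
  also have "\<dots> = of_real N * of_real N * cinner x x - of_real N * a * cinner x y
        - cnj a * of_real N * cinner y x + cnj a * a * cinner y y"
    by (simp add: cinner_diff_left cinner_diff_right cinner_scaleC_left cinner_scaleC_right algebra_simps)
  also have "\<dots> = of_real N * of_real N * of_real ((norm x)\<^sup>2) - of_real N * (a * cnj a)"
    by (simp add: a_def N_def cinner_self cinner_commute[of x y] algebra_simps)
  also have "\<dots> = complex_of_real (N * (N * (norm x)\<^sup>2 - (cmod a)\<^sup>2))"
    by (simp add: complex_norm_square[symmetric] algebra_simps)
  finally have "0 \<le> N * (N * (norm x)\<^sup>2 - (cmod a)\<^sup>2)"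
    by (metis of_real_eq_iff zero_le_power2)
  with N_pos have "(cmod a)\<^sup>2 \<le> (norm x * norm y)\<^sup>2"
    by (simp add: N_def zero_le_mult_iff power_mult_distrib mult.commute)
  then have "cmod a \<le> norm x * norm y"
    by (rule power2_le_imp_le) simp
  then show ?thesis
    using cinner_commute[of x y] by (simp add: a_def)
qed

lemma contraction_fixes_if_cinner_eq:
  fixes x :: "'a::complex_hilbert_space"
  assumes "norm (T x) \<le> norm x" and "cinner x (T x) = complex_of_real ((norm x)\<^sup>2)"
  shows "T x = x"
proof -
  have "complex_of_real ((norm (T x - x))\<^sup>2) = cinner (T x - x) (T x - x)"
    by (rule cinner_self[symmetric])
  also have "\<dots> = cinner (T x) (T x) - cnj (cinner x (T x)) - cinner x (T x) + cinner x x"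
    by (simp add: cinner_diff_left cinner_diff_right cinner_commute[of "T x" x])
  also have "\<dots> = complex_of_real ((norm (T x))\<^sup>2 - (norm x)\<^sup>2)"
    by (simp add: assms(2) cinner_self)
  finally have "(norm (T x - x))\<^sup>2 = (norm (T x))\<^sup>2 - (norm x)\<^sup>2"
    using of_real_eq_iff by blast
  moreover have "(norm (T x))\<^sup>2 \<le> (norm x)\<^sup>2"
    using assms(1) by (simp add: power_mono)
  ultimately have "(norm (T x - x))\<^sup>2 \<le> 0"
    by simp
  then show ?thesis
    by simp
qed

lemma holo_op_cinner_holomorphic:
  fixes \<psi> :: "complex \<Rightarrow> 'a::complex_hilbert_space \<Rightarrow> 'a"
  assumes "open S" and ops: "\<forall>z\<in>S. bounded_linear (\<psi> z)" and holo: "holo_op S \<psi>"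
  shows "(\<lambda>w. cinner x (\<psi> w y)) holomorphic_on S"
  unfolding holomorphic_on_def
proof
  fix z assume z: "z \<in> S"
  obtain L where L: "bounded_linear L"
    and lim: "((\<lambda>w. onorm (\<lambda>v. scaleC (inverse (w - z)) (\<psi> w v - \<psi> z v) - L v)) \<longlongrightarrow> 0) (at z)"
    using holo z unfolding holo_op_def by blast
  define D where "D w = (\<lambda>v. scaleC (inverse (w - z)) (\<psi> w v - \<psi> z v) - L v)" for w
  define g where "g w = cinner x (\<psi> w y)" for w
  have "eventually (\<lambda>w. w \<in> S) (at z)"
    using eventually_at_in_open'[OF \<open>open S\<close> z] .
  then have "eventually (\<lambda>w. norm ((g w - g z) / (w - z) - cinner x (L y))
      \<le> norm x * (onorm (D w) * norm y)) (at z)"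
  proof eventually_elim
    case (elim w)
    have "bounded_linear (D w)"
      unfolding D_def
      by (intro bounded_linear_sub L bounded_linear_compose[OF bounded_linear_scaleC])
        (use elim z ops in auto)
    have "(g w - g z) / (w - z) - cinner x (L y) = cinner x (D w y)"
      by (simp add: g_def D_def cinner_diff_right cinner_scaleC_right divide_inverse mult.commute)
    then have "norm ((g w - g z) / (w - z) - cinner x (L y)) \<le> norm x * norm (D w y)"
      by (simp add: cinner_Cauchy_Schwarz)
    also have "\<dots> \<le> norm x * (onorm (D w) * norm y)"
      by (rule mult_left_mono[OF onorm[OF \<open>bounded_linear (D w)\<close>]]) simp
    finally show ?case .
  qed
  moreover have "((\<lambda>w. norm x * (onorm (D w) * norm y)) \<longlongrightarrow> 0) (at z)"
    using tendsto_mult[OF tendsto_const tendsto_mult[OF lim tendsto_const]]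
    unfolding D_def by simp
  ultimately have "((\<lambda>w. (g w - g z) / (w - z) - cinner x (L y)) \<longlongrightarrow> 0) (at z)"
    by (rule Lim_null_comparison)
  then have "(g has_field_derivative cinner x (L y)) (at z)"
    by (simp add: has_field_derivative_iff LIM_zero_iff)
  then show "g field_differentiable at z within S"
    using field_differentiable_at_within field_differentiable_def by blast
qed

lemma holo_op_contraction_fixes:
  fixes \<psi> :: "complex \<Rightarrow> 'a::complex_hilbert_space \<Rightarrow> 'a"
  assumes "open S" "connected S"
    and ops: "\<forall>z\<in>S. bounded_linear (\<psi> z)" and holo: "holo_op S \<psi>"
    and contr: "\<forall>z\<in>S. onorm (\<psi> z) \<le> 1"
    and "z \<in> S" "\<psi> z x = x" and "w \<in> S"
  shows "\<psi> w x = x"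
proof -
  have norm_le: "norm (\<psi> u x) \<le> norm x" if "u \<in> S" for u
  proof -
    have "norm (\<psi> u x) \<le> onorm (\<psi> u) * norm x"
      using ops that by (simp add: onorm)
    also have "\<dots> \<le> 1 * norm x"
      by (rule mult_right_mono) (use contr that in auto)
    finally show ?thesis
      by simp
  qed
  define g where "g u = cinner x (\<psi> u x)" for u
  have g_z: "g z = complex_of_real ((norm x)\<^sup>2)"
    by (simp add: g_def \<open>\<psi> z x = x\<close> cinner_self)
  have g_max: "norm (g u) \<le> norm (g z)" if "u \<in> S" for u
  proof -
    have "norm (g u) \<le> norm x * norm (\<psi> u x)"
      unfolding g_def by (rule cinner_Cauchy_Schwarz)
    also have "\<dots> \<le> norm x * norm x"
      by (rule mult_left_mono[OF norm_le[OF that]]) simp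
    finally show ?thesis
      by (simp add: g_z power2_eq_square norm_mult)
  qed
  have "g holomorphic_on S"
    unfolding g_def by (rule holo_op_cinner_holomorphic[OF \<open>open S\<close> ops holo])
  then have "g constant_on S"
    using \<open>open S\<close> \<open>connected S\<close> \<open>open S\<close> order_refl \<open>z \<in> S\<close> g_max
    by (rule maximum_modulus_principle)
  then have "g w = complex_of_real ((norm x)\<^sup>2)"
    using \<open>z \<in> S\<close> \<open>w \<in> S\<close> g_z by (metis constant_on_def)
  then show ?thesis
    using contraction_fixes_if_cinner_eq[of "\<psi> w", OF norm_le[OF \<open>w \<in> S\<close>]] by (simp add: g_def)
qed

lemma holo_op_contraction_common_fixed_vector:
  fixes \<psi> :: "complex \<Rightarrow> 'a::complex_hilbert_space \<Rightarrow> 'a"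
  assumes "open S" "connected S"
    and ops: "\<forall>z\<in>S. bounded_linear (\<psi> z)" and holo: "holo_op S \<psi>"
    and contr: "\<forall>z\<in>S. onorm (\<psi> z) \<le> 1"
    and "z \<in> S" "is_eigenvalue 1 (\<psi> z)"
  shows "\<exists>x. x \<noteq> 0 \<and> (\<forall>w\<in>S. \<psi> w x = x)"
proof -
  obtain x where "x \<noteq> 0" "\<psi> z x = x"
    using \<open>is_eigenvalue 1 (\<psi> z)\<close> unfolding is_eigenvalue_def scaleC_one by blast
  then show ?thesis
    using holo_op_contraction_fixes[OF assms(1-5) \<open>z \<in> S\<close>] by blast
qed

lemma constant_in_hardy2: "(\<lambda>_. x) \<in> (hardy2 :: (complex \<Rightarrow> 'a::complex_hilbert_space) set)"
proof -
  have "holo_vec (ball 0 1) (\<lambda>_. x)"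
    unfolding holo_vec_def by (auto intro!: exI[of _ 0])
  then show ?thesis
    unfolding hardy2_def by (intro CollectI conjI exI[of _ "2 * pi * (norm x)\<^sup>2"]) (auto intro: exI[of _ 0])
qed

theorem lemma2p1:
  fixes \<psi> :: "complex \<Rightarrow> 'e::complex_hilbert_space \<Rightarrow> 'e"
  assumes separable: "\<exists>D::'e set. countable D \<and> closure D = UNIV"
    and ops: "\<forall>z\<in>ball 0 1. cblinear (\<psi> z)"
    and holo: "holo_op (ball 0 1) \<psi>"
    and contr: "\<forall>z\<in>ball 0 1. onorm (\<psi> z) \<le> 1"
  shows "((\<exists>f\<in>hardy2. (\<exists>z\<in>ball 0 1. f z \<noteq> 0) \<and> (\<forall>z\<in>ball 0 1. \<psi> z (f z) = scaleC 1 (f z)))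
            \<longleftrightarrow> (\<exists>z\<in>ball 0 1. is_eigenvalue 1 (\<psi> z)))
       \<and> ((\<exists>z\<in>ball 0 1. is_eigenvalue 1 (\<psi> z))
            \<longleftrightarrow> (\<forall>z\<in>ball 0 1. is_eigenvalue 1 (\<psi> z)))"
proof -
  have "\<forall>z\<in>ball 0 1. bounded_linear (\<psi> z)"
    using ops by (simp add: cblinear_def)
  note common_fixed_vector =
    holo_op_contraction_common_fixed_vector[OF open_ball connected_ball this holo contr]
  show ?thesis
  proof (intro conjI iffI)
    assume "\<exists>z\<in>ball 0 1. is_eigenvalue 1 (\<psi> z)"
    then obtain x where "x \<noteq> 0" "\<forall>w\<in>ball 0 1. \<psi> w x = x"
      using common_fixed_vector by blast
    then show "\<exists>f\<in>hardy2. (\<exists>z\<in>ball 0 1. f z \<noteq> 0) \<and> (\<forall>z\<in>ball 0 1. \<psi> z (f z) = scaleC 1 (f z))"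
      using constant_in_hardy2[of x]
      by (intro bexI[of _ "\<lambda>_. x"] conjI bexI[of _ 0]) (auto simp: scaleC_one)
  next
    assume "\<exists>z\<in>ball 0 1. is_eigenvalue 1 (\<psi> z)"
    then obtain x where "x \<noteq> 0" "\<forall>w\<in>ball 0 1. \<psi> w x = x"
      using common_fixed_vector by blast
    then show "\<forall>z\<in>ball 0 1. is_eigenvalue 1 (\<psi> z)"
      by (auto simp: is_eigenvalue_def scaleC_one)
  next
    assume "\<exists>f\<in>hardy2. (\<exists>z\<in>ball 0 1. f z \<noteq> 0) \<and> (\<forall>z\<in>ball 0 1. \<psi> z (f z) = scaleC 1 (f z))"
    then show "\<exists>z\<in>ball 0 1. is_eigenvalue 1 (\<psi> z)"
      unfolding is_eigenvalue_def scaleC_one by blast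
  next
    assume "\<forall>z\<in>ball 0 1. is_eigenvalue 1 (\<psi> z)"
    moreover have "(0::complex) \<in> ball 0 1"
      by simp
    ultimately show "\<exists>z\<in>ball 0 1. is_eigenvalue 1 (\<psi> z)"
      by blast
  qed
qed

end
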